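(* Let $M \subseteq \mathrm{Inj}(\Omega)$ be a normal submonoid. Then either $M \cap \mathrm{Inj}_{\infty}(\Omega) = \emptyset$ or $\mathrm{Inj}_{\infty}(\Omega) \subseteq M$.
   Context: $\Omega$ is a countably infinite set; maps are written on the right and composed left to right. $\mathrm{Inj}(\Omega)$ is the monoid of all injective maps $\Omega\to\Omega$, $\mathrm{Sym}(\Omega)$ the group of permutations of $\Omega$. $\mathrm{Inj}_\infty(\Omega)=\{f\in\mathrm{Inj}(\Omega): |\Omega\setminus(\Omega)f|=\aleph_0\}$. A subset of $\mathrm{Inj}(\Omega)$ is normal if it is closed under $f\mapsto afa^{-1}$ for all $a\in\mathrm{Sym}(\Omega)$. *)

theory Defs
  imports Main "HOL-Library.Countable_Set"
begin

text \<open>Maps are Isabelle functions; the paper composes left to right, so the paper's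
  product f g (first f, then g) is g \<circ> f here.\<close>

definition Inj :: "('a \<Rightarrow> 'a) set" where
  "Inj = {f. inj f}"

definition Sym :: "('a \<Rightarrow> 'a) set" where
  "Sym = {f. bij f}"

definition Inj_inf :: "('a \<Rightarrow> 'a) set" where
  "Inj_inf = {f. inj f \<and> infinite (UNIV - range f)}"

definition submonoid_Inj :: "('a \<Rightarrow> 'a) set \<Rightarrow> bool" where
  "submonoid_Inj M \<longleftrightarrow> M \<subseteq> Inj \<and> id \<in> M \<and> (\<forall>f\<in>M. \<forall>g\<in>M. g \<circ> f \<in> M)"

text \<open>Paper: closed under f \<mapsto> a f a^{-1} (left-to-right), i.e. x \<mapsto> (inv a)(f(a x)).\<close>
definition normal_Inj :: "('a \<Rightarrow> 'a) set \<Rightarrow> bool" where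
  "normal_Inj M \<longleftrightarrow> (\<forall>f\<in>M. \<forall>a\<in>Sym. inv a \<circ> f \<circ> a \<in> M)"

end

theory Submission
  imports Defs
begin

(* Call an injection t a ray injection if its co-range is infinite and some
   rank function r :: 'a => nat satisfies r x < r (t x).  Then every point lies on exactly
   one forward t-orbit starting outside range t, so t is a disjoint union of countably
   infinitely many copies of the successor map on nat; consequently, on a countable set,
   any two ray injections are conjugate by a permutation. *)

section \<open>Ray injections and their conjugacy\<close>

definition ranked :: "('a \<Rightarrow> 'a) \<Rightarrow> bool" where
  "ranked t \<longleftrightarrow> (\<exists>r::'a \<Rightarrow> nat. \<forall>x. r x < r (t x))"

text \<open>A ray injection is a ranked injection with infinite co-range; up to conjugacy it is
  the map (b, n) \<mapsto> (b, n + 1) on (- range t) \<times> nat.\<close>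
definition ray_injection :: "('a \<Rightarrow> 'a) \<Rightarrow> bool" where
  "ray_injection t \<longleftrightarrow> inj t \<and> infinite (- range t) \<and> ranked t"

text \<open>Under a ranked map, following preimages must stop, so every point is an iterate
  of a point outside the range.\<close>
lemma ranked_ray_base:
  assumes "ranked t"
  shows "\<exists>b n. b \<notin> range t \<and> x = (t^^n) b"
proof -
  obtain r :: "'a \<Rightarrow> nat" where r: "\<And>x. r x < r (t x)"
    using assms unfolding ranked_def by blast
  show ?thesis
  proof (induction x rule: measure_induct_rule[of r])
    case (less x)
    show ?case
    proof (cases "x \<in> range t")
      case True
      then obtain y where xy: "x = t y" by auto
      with r have "r y < r x" by auto
      with less obtain b n where "b \<notin> range t" "y = (t^^n) b" by blast
      then show ?thesis using xy by (intro exI[of _ b] exI[of _ "Suc n"]) auto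
    next
      case False
      then show ?thesis by (intro exI[of _ x] exI[of _ 0]) auto
    qed
  qed
qed

lemma ray_base_unique:
  assumes "inj t" "a \<notin> range t" "b \<notin> range t" "(t^^n) a = (t^^m) b"
  shows "n = m \<and> a = b"
  using assms(4)
proof (induction n arbitrary: m)
  case 0
  then show ?case using assms(2) by (cases m) auto
next
  case (Suc n)
  show ?case
  proof (cases m)
    case 0
    then show ?thesis using Suc.prems assms(3) by auto
  next
    case (Suc k)
    then have "(t^^n) a = (t^^k) b" using Suc.prems assms(1) by (auto dest: injD)
    then show ?thesis using Suc.IH Suc by auto
  qed
qed

definition ray_coord :: "('a \<Rightarrow> 'a) \<Rightarrow> 'a \<Rightarrow> 'a \<times> nat" where
  "ray_coord t x = (THE p. fst p \<notin> range t \<and> x = (t^^snd p) (fst p))"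

lemma ray_coord_iterate:
  assumes "inj t" "b \<notin> range t"
  shows "ray_coord t ((t^^n) b) = (b, n)"
  unfolding ray_coord_def
proof (rule the_equality)
  fix p assume "fst p \<notin> range t \<and> (t^^n) b = (t^^snd p) (fst p)"
  then show "p = (b, n)" using ray_base_unique[OF assms(1) assms(2)] by (metis prod.collapse)
qed (use assms in simp)

text \<open>Two ranked injections are conjugate as soon as their sets of base points are in
  bijection: map the n-th point of the ray from b to the n-th point of the ray from phi b.\<close>
lemma conjugate_along_bases:
  assumes s: "inj s" "ranked s" and t: "inj t" "ranked t"
    and \<phi>: "bij_betw \<phi> (- range s) (- range t)"
  shows "\<exists>a. bij a \<and> a \<circ> s = t \<circ> a"
proof -
  define a where "a x = (t^^snd (ray_coord s x)) (\<phi> (fst (ray_coord s x)))" for x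
  have a_iterate: "a ((s^^n) b) = (t^^n) (\<phi> b)" if "b \<notin> range s" for b n
    using ray_coord_iterate[OF s(1) that] by (simp add: a_def)
  have \<phi>_base: "\<phi> b \<notin> range t" if "b \<notin> range s" for b
    using \<phi> that bij_betwE by fastforce
  have comm: "a (s x) = t (a x)" for x
  proof -
    obtain b n where "b \<notin> range s" "x = (s^^n) b" using ranked_ray_base[OF s(2)] by blast
    then show ?thesis using a_iterate[of b "Suc n"] a_iterate[of b n] by simp
  qed
  have "inj a"
  proof (rule injI)
    fix x y assume "a x = a y"
    obtain b n where b: "b \<notin> range s" "x = (s^^n) b" using ranked_ray_base[OF s(2)] by blast
    obtain b' m where b': "b' \<notin> range s" "y = (s^^m) b'" using ranked_ray_base[OF s(2)] by blast
    have "(t^^n) (\<phi> b) = (t^^m) (\<phi> b')" using \<open>a x = a y\<close> a_iterate b b' by simp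
    then have "n = m" "\<phi> b = \<phi> b'" using ray_base_unique[OF t(1) \<phi>_base \<phi>_base] b b' by blast+
    moreover have "b = b'"
      using \<open>\<phi> b = \<phi> b'\<close> b b' bij_betw_imp_inj_on[OF \<phi>] by (auto dest: inj_onD)
    ultimately show "x = y" using b b' by simp
  qed
  moreover have "z \<in> range a" for z
  proof -
    obtain c n where c: "c \<notin> range t" "z = (t^^n) c" using ranked_ray_base[OF t(2)] by blast
    then obtain b where "b \<notin> range s" "\<phi> b = c"
      using bij_betw_imp_surj_on[OF \<phi>] by (metis ComplD ComplI imageE)
    then have "a ((s^^n) b) = z" using a_iterate c by simp
    then show ?thesis by (metis rangeI)
  qed
  ultimately show ?thesis using comm by (auto simp: bij_def fun_eq_iff)
qed

text \<open>On a countable set all ray injections are conjugate: their co-ranges are countably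
  infinite and hence in bijection.\<close>
lemma ray_injections_conjugate:
  fixes s t :: "'a \<Rightarrow> 'a"
  assumes "countable (UNIV :: 'a set)" and s: "ray_injection s" and t: "ray_injection t"
  shows "\<exists>a. bij a \<and> s = inv a \<circ> t \<circ> a"
proof -
  have countable: "countable (- range s)" "countable (- range t)"
    by (rule countable_subset[OF subset_UNIV assms(1)])+
  have "bij_betw (to_nat_on (- range s)) (- range s) UNIV"
    "bij_betw (from_nat_into (- range t)) UNIV (- range t)"
    using s t countable unfolding ray_injection_def
    by (simp_all add: to_nat_on_infinite bij_betw_from_nat_into)
  then have "bij_betw (from_nat_into (- range t) \<circ> to_nat_on (- range s)) (- range s) (- range t)"
    by (rule bij_betw_trans)
  then obtain a where a: "bij a" "a \<circ> s = t \<circ> a"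
    using conjugate_along_bases s t unfolding ray_injection_def by blast
  have "inv a \<circ> t \<circ> a = inv a \<circ> (a \<circ> s)" by (simp only: a(2) comp_assoc)
  also have "\<dots> = s" using bij_is_inj[OF a(1)] by (simp add: comp_assoc[symmetric])
  finally show ?thesis using a(1) by blast
qed

lemma normal_contains_all_rays:
  fixes s t :: "'a \<Rightarrow> 'a"
  assumes "countable (UNIV :: 'a set)" "normal_Inj M" "t \<in> M" "ray_injection t"
    and s: "ray_injection s"
  shows "s \<in> M"
proof -
  obtain a where a: "bij a" "s = inv a \<circ> t \<circ> a"
    using ray_injections_conjugate[OF assms(1) s assms(4)] by blast
  have "a \<in> Sym" using a(1) by (simp add: Sym_def)
  then have "inv a \<circ> t \<circ> a \<in> M" using assms(2,3) unfolding normal_Inj_def by blast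
  then show ?thesis using a(2) by simp
qed

section \<open>A ray injection built from an arbitrary element of Inj_inf\<close>

definition core :: "('a \<Rightarrow> 'a) \<Rightarrow> 'a set" where
  "core f = (\<Inter>n. range (f^^n))"

definition depth :: "('a \<Rightarrow> 'a) \<Rightarrow> 'a \<Rightarrow> nat" where
  "depth f x = (LEAST n. x \<notin> range (f^^Suc n))"

lemma core_subset_range: "core f \<subseteq> range f"
proof
  fix x assume "x \<in> core f"
  then have "x \<in> range (f^^Suc 0)" unfolding core_def by blast
  then show "x \<in> range f" by simp
qed

lemma range_funpow_Suc:
  fixes f :: "'a \<Rightarrow> 'a"
  shows "range (f^^Suc n) \<subseteq> range (f^^n)"
proof
  fix x assume "x \<in> range (f^^Suc n)"
  then obtain y where "x = (f^^Suc n) y" by blast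
  then have "x = (f^^n) (f y)" by (simp add: funpow_swap1)
  then show "x \<in> range (f^^n)" by blast
qed

lemma core_image_iff:
  fixes f :: "'a \<Rightarrow> 'a"
  assumes "inj f"
  shows "f x \<in> core f \<longleftrightarrow> x \<in> core f"
proof
  assume fx: "f x \<in> core f"
  have "x \<in> range (f^^n)" for n
  proof -
    have "f x \<in> range (f^^Suc n)" using fx unfolding core_def by blast
    then obtain y where "f x = f ((f^^n) y)" by auto
    then show ?thesis using assms by (auto dest: injD)
  qed
  then show "x \<in> core f" unfolding core_def by blast
next
  assume x: "x \<in> core f"
  have "f x \<in> range (f^^n)" for n
  proof -
    obtain y where "x = (f^^n) y" using x unfolding core_def by blast
    then have "f x = (f^^n) (f y)" by (simp add: funpow_swap1)
    then show ?thesis by blast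
  qed
  then show "f x \<in> core f" unfolding core_def by blast
qed

lemma depth_outside_range: "x \<notin> range f \<Longrightarrow> depth f x = 0"
  unfolding depth_def by (intro Least_eq_0) simp

lemma depth_increases:
  fixes f :: "'a \<Rightarrow> 'a"
  assumes "inj f" "x \<notin> core f"
  shows "depth f x < depth f (f x)"
proof -
  have "f x \<notin> core f" using core_image_iff[OF assms(1)] assms(2) by simp
  then obtain n where "f x \<notin> range (f^^n)" unfolding core_def by blast
  then have "f x \<notin> range (f^^Suc n)" using range_funpow_Suc[of n f] by blast
  then have not_in: "f x \<notin> range (f^^Suc (depth f (f x)))"
    unfolding depth_def by (rule LeastI)
  show ?thesis
  proof (cases "depth f (f x)")
    case 0
    then show ?thesis using not_in by simp
  next
    case (Suc k)
    have "x \<notin> range (f^^Suc k)"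
    proof
      assume "x \<in> range (f^^Suc k)"
      then obtain y where "x = (f^^Suc k) y" by blast
      then have "f x = (f^^Suc (depth f (f x))) y" using Suc by simp
      then show False using not_in by blast
    qed
    then have "depth f x \<le> k" unfolding depth_def by (rule Least_le)
    then show ?thesis using Suc by simp
  qed
qed

definition set_swap :: "('a \<Rightarrow> 'a) \<Rightarrow> 'a set \<Rightarrow> 'a \<Rightarrow> 'a" where
  "set_swap \<beta> K x = (if x \<in> K then \<beta> x else if x \<in> \<beta> ` K then inv_into K \<beta> x else x)"

lemma set_swap_involution:
  assumes "inj_on \<beta> K" "\<beta> ` K \<inter> K = {}"
  shows "set_swap \<beta> K \<circ> set_swap \<beta> K = id"
proof
  fix x
  show "(set_swap \<beta> K \<circ> set_swap \<beta> K) x = id x"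
  proof (cases "x \<in> K")
    case True
    then have "\<beta> x \<notin> K" "\<beta> x \<in> \<beta> ` K" using assms(2) by auto
    then show ?thesis using True assms(1) by (simp add: set_swap_def)
  next
    case outside_K: False
    show ?thesis
    proof (cases "x \<in> \<beta> ` K")
      case True
      then have "inv_into K \<beta> x \<in> K" by (rule inv_into_into)
      then show ?thesis using True outside_K by (simp add: set_swap_def f_inv_into_f)
    next
      case False
      then show ?thesis using outside_K by (simp add: set_swap_def)
    qed
  qed
qed

text \<open>Let beta map the core K of an injection f injectively to
  points outside range f, and let sigma swap K with its image.  The inner part
  sigma o f o sigma of t = f o sigma o f o sigma sends every point outside K and does not
  decrease the depth of points outside K (points of beta ` K have depth 0).\<close>
lemma swapped_core_step:
  fixes f \<beta> :: "'a \<Rightarrow> 'a"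
  assumes f: "inj f" and \<beta>_inj: "inj_on \<beta> (core f)" and \<beta>_outside: "\<And>x. \<beta> x \<notin> range f"
  shows "set_swap \<beta> (core f) (f (set_swap \<beta> (core f) x)) \<notin> core f \<and>
    (x \<notin> core f \<longrightarrow> depth f x \<le> depth f (set_swap \<beta> (core f) (f (set_swap \<beta> (core f) x))))"
proof -
  let ?K = "core f" and ?\<sigma> = "set_swap \<beta> (core f)"
  have core_iff: "f y \<in> ?K \<longleftrightarrow> y \<in> ?K" for y by (rule core_image_iff[OF f])
  have \<beta>_not_core: "\<beta> y \<notin> ?K" for y using \<beta>_outside core_subset_range[of f] by blast
  have not_in_image: "f y \<notin> \<beta> ` ?K" for y using \<beta>_outside by (metis imageE rangeI)
  show ?thesis
  proof (cases "x \<in> ?K")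
    case True
    then show ?thesis using core_iff \<beta>_not_core not_in_image by (simp add: set_swap_def)
  next
    case outside: False
    show ?thesis
    proof (cases "x \<in> \<beta> ` ?K")
      case True
      have "inv_into ?K \<beta> x \<in> ?K" using True by (rule inv_into_into)
      then have "?\<sigma> (f (?\<sigma> x)) = \<beta> (f (inv_into ?K \<beta> x))"
        using True outside core_iff by (simp add: set_swap_def)
      moreover have "depth f x = 0" using True \<beta>_outside by (auto intro: depth_outside_range)
      ultimately show ?thesis using \<beta>_not_core by simp
    next
      case False
      then have "?\<sigma> (f (?\<sigma> x)) = f x"
        using outside core_iff not_in_image by (simp add: set_swap_def)
      then show ?thesis using outside core_iff depth_increases[OF f outside] by simp
    qed
  qed
qed

text \<open>Consequently t = f o sigma o f o sigma is ranked by r x = 0 on the core and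
  r x = depth x + 1 elsewhere: t x = f y with y outside the core, and f raises depth there.\<close>
lemma swapped_core_ranked:
  fixes f \<beta> :: "'a \<Rightarrow> 'a"
  assumes f: "inj f" and "inj_on \<beta> (core f)" and "\<And>x. \<beta> x \<notin> range f"
  shows "ranked (f \<circ> set_swap \<beta> (core f) \<circ> f \<circ> set_swap \<beta> (core f))"
proof -
  let ?\<sigma> = "set_swap \<beta> (core f)"
  define r where "r x = (if x \<in> core f then 0 else Suc (depth f x))" for x
  have "r x < r ((f \<circ> ?\<sigma> \<circ> f \<circ> ?\<sigma>) x)" for x
  proof -
    define y where "y = ?\<sigma> (f (?\<sigma> x))"
    have "y \<notin> core f" "x \<notin> core f \<longrightarrow> depth f x \<le> depth f y"
      using swapped_core_step[OF assms] unfolding y_def by blast+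
    moreover have "f y \<notin> core f" "depth f y < depth f (f y)"
      using \<open>y \<notin> core f\<close> core_image_iff[OF f] depth_increases[OF f] by auto
    ultimately show ?thesis unfolding r_def y_def by auto
  qed
  then show ?thesis unfolding ranked_def by blast
qed

text \<open>Every injection f with infinite co-range yields, for a suitable involution sigma, the
  ray injection f o sigma o f o sigma: the core is countable and the co-range infinite, so
  some beta as above exists.\<close>
lemma ray_injection_from_swapped_core:
  fixes f :: "'a \<Rightarrow> 'a"
  assumes "countable (UNIV :: 'a set)" and f: "inj f" "infinite (- range f)"
  obtains \<sigma> where "\<sigma> \<circ> \<sigma> = id" "ray_injection (f \<circ> \<sigma> \<circ> f \<circ> \<sigma>)"
proof -
  obtain h :: "nat \<Rightarrow> 'a" where h: "inj h" "range h \<subseteq> - range f"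
    using infinite_countable_subset[OF f(2)] by blast
  define \<beta> where "\<beta> = h \<circ> to_nat_on (core f)"
  have \<beta>_inj: "inj_on \<beta> (core f)"
    unfolding \<beta>_def using countable_subset[OF subset_UNIV assms(1)] h(1)
    by (auto intro: comp_inj_on inj_on_subset)
  have \<beta>_outside: "\<beta> x \<notin> range f" for x using h(2) unfolding \<beta>_def by auto
  define \<sigma> where "\<sigma> = set_swap \<beta> (core f)"
  have \<sigma>_invol: "\<sigma> \<circ> \<sigma> = id"
    unfolding \<sigma>_def using \<beta>_inj \<beta>_outside core_subset_range[of f]
    by (blast intro: set_swap_involution)
  define t where "t = f \<circ> \<sigma> \<circ> f \<circ> \<sigma>"
  have "ranked t" unfolding t_def \<sigma>_def using swapped_core_ranked[OF f(1) \<beta>_inj \<beta>_outside] .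
  moreover have "inj t"
    unfolding t_def using f(1) bij_is_inj[OF o_bij[OF \<sigma>_invol \<sigma>_invol]] by (simp add: inj_compose)
  moreover have "range t \<subseteq> range f" unfolding t_def by auto
  then have "infinite (- range t)" using f(2) by (meson Compl_anti_mono infinite_super)
  ultimately show ?thesis using that \<sigma>_invol unfolding ray_injection_def t_def by blast
qed

text \<open>A normal submonoid meeting Inj_inf therefore contains a ray injection: with f in M
  and sigma as above, f o (sigma o f o sigma) is a product of f and a conjugate of f.\<close>
lemma normal_submonoid_contains_ray:
  fixes f :: "'a \<Rightarrow> 'a"
  assumes "countable (UNIV :: 'a set)" "submonoid_Inj M" "normal_Inj M"
    and "f \<in> M" "f \<in> Inj_inf"
  obtains t where "t \<in> M" "ray_injection t"
proof -
  have f: "inj f" "infinite (- range f)"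
    using assms(5) by (auto simp: Inj_inf_def Compl_eq_Diff_UNIV)
  obtain \<sigma> where \<sigma>: "\<sigma> \<circ> \<sigma> = id" "ray_injection (f \<circ> \<sigma> \<circ> f \<circ> \<sigma>)"
    using ray_injection_from_swapped_core[OF assms(1) f] by blast
  have "\<sigma> \<in> Sym" using o_bij[OF \<sigma>(1) \<sigma>(1)] by (simp add: Sym_def)
  then have "inv \<sigma> \<circ> f \<circ> \<sigma> \<in> M" using assms(3,4) unfolding normal_Inj_def by blast
  then have "\<sigma> \<circ> f \<circ> \<sigma> \<in> M" using inv_unique_comp[OF \<sigma>(1) \<sigma>(1)] by simp
  then have "f \<circ> (\<sigma> \<circ> f \<circ> \<sigma>) \<in> M" using assms(2,4) unfolding submonoid_Inj_def by blast
  then show ?thesis using that \<sigma>(2) by (simp add: comp_assoc)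
qed

section \<open>Every element of Inj_inf is a product of two ray injections\<close>

text \<open>Into any infinite subset E of a countable set there is a ranked injection: enumerate E
  as e 0, e 1, ..., send e n to e (2n+1) and every other point x to e (2 i(x)), where i
  enumerates the whole set.  The index in E serves as rank.\<close>
lemma ranked_injection_into:
  fixes E :: "'a set"
  assumes "countable (UNIV :: 'a set)" "infinite E"
  obtains v :: "'a \<Rightarrow> 'a" where "inj v" "range v \<subseteq> E" "ranked v"
proof -
  have E: "countable E" "E \<noteq> {}"
    using countable_subset[OF subset_UNIV assms(1)] assms(2) by auto
  let ?e = "from_nat_into E" and ?n = "to_nat_on E" and ?i = "to_nat_on (UNIV :: 'a set)"
  define index where "index x = (if x \<in> E then 2 * ?n x + 1 else 2 * ?i x)" for x
  define v where "v x = ?e (index x)" for x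
  have "inj index"
  proof (rule injI)
    fix x y assume "index x = index y"
    then show "x = y" using E(1) assms(1) unfolding index_def
      by (auto split: if_splits) presburger+
  qed
  then have "inj v" unfolding v_def using E(1) assms(2) by (simp add: inj_def)
  moreover have "range v \<subseteq> E" unfolding v_def using from_nat_into[OF E(2)] by auto
  moreover have "ranked v"
  proof -
    define r where "r x = (if x \<in> E then Suc (?n x) else 0)" for x
    have "r x < r (v x)" for x
      using from_nat_into[OF E(2)] E(1) assms(2) by (simp add: r_def v_def index_def)
    then show ?thesis unfolding ranked_def by blast
  qed
  ultimately show ?thesis using that by blast
qed

lemma inj_glue:
  assumes "inj_on p S" "inj_on q (- S)" "p ` S \<inter> q ` (- S) = {}"
  shows "inj (\<lambda>y. if y \<in> S then p y else q y)"
proof (rule injI)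
  fix x y assume "(if x \<in> S then p x else q x) = (if y \<in> S then p y else q y)"
  then show "x = y" using assms by (cases "x \<in> S"; cases "y \<in> S") (auto dest: inj_onD)
qed

text \<open>Split the co-range of g into disjoint infinite sets A and B and take ranked injections
  v into A and w into B.  Then g = u o v, where u follows g o v^-1 on range v and w elsewhere;
  u is injective because range g and B are disjoint, and A lies outside range u.\<close>
lemma Inj_inf_product_of_rays:
  fixes g :: "'a \<Rightarrow> 'a"
  assumes "countable (UNIV :: 'a set)" "g \<in> Inj_inf"
  obtains u v where "ray_injection u" "ray_injection v" "g = u \<circ> v"
proof -
  have g: "inj g" "infinite (- range g)"
    using assms(2) by (auto simp: Inj_inf_def Compl_eq_Diff_UNIV)
  obtain A B where AB: "A \<subseteq> - range g" "B \<subseteq> - range g" "infinite A" "infinite B" "A \<inter> B = {}"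
    using infinite_split[OF g(2)] by blast
  obtain v where v: "inj v" "range v \<subseteq> A" "ranked v"
    using ranked_injection_into[OF assms(1) AB(3)] by blast
  obtain w where w: "inj w" "range w \<subseteq> B" "ranked w"
    using ranked_injection_into[OF assms(1) AB(4)] by blast
  obtain rw :: "'a \<Rightarrow> nat" where rw: "\<And>x. rw x < rw (w x)" using w(3) unfolding ranked_def by blast
  define u where "u = (\<lambda>y. if y \<in> range v then (g \<circ> inv v) y else w y)"
  have g_eq: "g = u \<circ> v" by (rule ext) (simp add: u_def v(1))
  have u_in_g: "u y \<in> range g" if "y \<in> range v" for y using that by (simp add: u_def)
  have u_in_B: "u y \<in> B" if "y \<notin> range v" for y using that w(2) by (auto simp: u_def)
  have range_u: "range u \<subseteq> range g \<union> B" using u_in_g u_in_B by blast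
  have "inj_on (g \<circ> inv v) (range v)"
    using inj_on_inv_into[of "range v" v UNIV] inj_on_subset[OF g(1)] by (blast intro: comp_inj_on)
  moreover have "inj_on w (- range v)" using w(1) by (rule inj_on_subset) simp
  moreover have "(g \<circ> inv v) ` range v \<inter> w ` (- range v) = {}" using w(2) AB(2) by auto
  ultimately have "inj u" unfolding u_def by (rule inj_glue)
  moreover have "ranked u"
  proof -
    define r where "r y = (if y \<in> range v then 0 else Suc (rw y))" for y
    have "u y \<notin> range v" for y using range_u v(2) AB(1,5) by blast
    then have "r y < r (u y)" for y using rw[of y] by (simp add: r_def u_def)
    then show ?thesis unfolding ranked_def by blast
  qed
  moreover have "A \<subseteq> - range u" using range_u AB(1,5) by blast
  then have "infinite (- range u)" using AB(3) by (rule infinite_super)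
  moreover have "B \<subseteq> - range v" using v(2) AB(5) by blast
  then have "infinite (- range v)" using AB(4) by (rule infinite_super)
  ultimately show ?thesis using that[of u v] g_eq v(1,3) unfolding ray_injection_def by blast
qed

theorem mainTheorem3:
  fixes M :: "('a \<Rightarrow> 'a) set"
  assumes "countable (UNIV :: 'a set)" and "infinite (UNIV :: 'a set)"
    and "submonoid_Inj M" and "normal_Inj M"
  shows "M \<inter> Inj_inf = {} \<or> Inj_inf \<subseteq> M"
proof (cases "M \<inter> Inj_inf = {}")
  case False
  then obtain f where "f \<in> M" "f \<in> Inj_inf" by blast
  then obtain t where t: "t \<in> M" "ray_injection t"
    using normal_submonoid_contains_ray[OF assms(1,3,4)] by blast
  have "g \<in> M" if g: "g \<in> Inj_inf" for g
  proof -
    obtain u v where uv: "ray_injection u" "ray_injection v" "g = u \<circ> v"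
      using Inj_inf_product_of_rays[OF assms(1) g] by blast
    have "u \<in> M" "v \<in> M" using normal_contains_all_rays[OF assms(1,4) t] uv(1,2) by blast+
    then show ?thesis using assms(3) uv(3) unfolding submonoid_Inj_def by blast
  qed
  then show ?thesis by blast
qed simp

end
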